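(* Let $G\le \mathrm{Aut}(X^* )$ be a closed self-similar subgroup with Haar probability measure $\mu$. Then for every $n,m\ge 1$, every $a\in\pi_n(G)$, every $b\in\pi_m(G)$ and every $v\in\mathcal{L}_n$ such that $C_a\cap\mathcal{T}_v^{-1}(C_b)\neq\emptyset$, we have $$\mu\big(C_a\cap\mathcal{T}_v^{-1}(C_b)\big)\ \ge\ \mu(C_a)\cdot\mu(C_b).$$
   Context: $X$ is a finite alphabet and $X^*$ the rooted regular tree of finite words over $X$; $\mathrm{Aut}(X^* )$ is its automorphism group with the profinite topology. For $g\in\mathrm{Aut}(X^* )$ and $v\in X^*$, the section $g|_v\in\mathrm{Aut}(X^* )$ is defined by $g(vw)=g(v)\,g|_v(w)$ for all $w\in X^*$. $G$ is self-similar if $g|_v\in G$ for all $g\in G$, $v\in X^*$. $X^n$ is the truncated tree of height $n$, $\mathcal{L}_n\subset X^*$ the set of vertices at distance $n$ from the root, and $\pi_n:G\to\mathrm{Aut}(X^n)$ the restriction map; $\mathrm{St}_G(n)=\ker\pi_n$. For $a\in\pi_n(G)$, the cone set is $C_a=\pi_n^{-1}(a)\subseteq G$. For $v\in X^*$, $\mathcal{T}_v:G\to G$ is the map $\mathcal{T}_v(g)=g|_v$. *)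

theory Defs
  imports "HOL-Probability.Probability"
begin

definition tree_aut :: "('x list \<Rightarrow> 'x list) \<Rightarrow> bool" where
  "tree_aut g \<longleftrightarrow> bij g \<and> g [] = [] \<and> (\<forall>v x. \<exists>y. g (v @ [x]) = g v @ [y])"

text \<open>Section g|_v, defined by g(vw) = g(v) g|_v(w).\<close>
definition sect :: "('x list \<Rightarrow> 'x list) \<Rightarrow> 'x list \<Rightarrow> ('x list \<Rightarrow> 'x list)" where
  "sect g v = (\<lambda>w. drop (length (g v)) (g (v @ w)))"

definition trunc :: "nat \<Rightarrow> ('x list \<Rightarrow> 'x list) \<Rightarrow> ('x list \<Rightarrow> 'x list)" where
  "trunc n g = restrict g {w. length w \<le> n}"

definition cone :: "('x list \<Rightarrow> 'x list) set \<Rightarrow> nat \<Rightarrow> ('x list \<Rightarrow> 'x list) \<Rightarrow> ('x list \<Rightarrow> 'x list) set" where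
  "cone G n a = {g \<in> G. trunc n g = a}"

definition aut_subgroup :: "('x list \<Rightarrow> 'x list) set \<Rightarrow> bool" where
  "aut_subgroup G \<longleftrightarrow> G \<subseteq> {g. tree_aut g} \<and> id \<in> G \<and>
     (\<forall>g\<in>G. \<forall>h\<in>G. g \<circ> h \<in> G) \<and> (\<forall>g\<in>G. inv g \<in> G)"

text \<open>Closedness in the profinite topology: every automorphism all of whose truncations
  are truncations of elements of G lies in G.\<close>
definition profinite_closed :: "('x list \<Rightarrow> 'x list) set \<Rightarrow> bool" where
  "profinite_closed G \<longleftrightarrow>
     (\<forall>g. tree_aut g \<and> (\<forall>n. \<exists>h\<in>G. trunc n h = trunc n g) \<longrightarrow> g \<in> G)"

definition self_similar :: "('x list \<Rightarrow> 'x list) set \<Rightarrow> bool" where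
  "self_similar G \<longleftrightarrow> (\<forall>g\<in>G. \<forall>v. sect g v \<in> G)"

text \<open>Haar probability measure on G: a probability measure on the Borel sets of G
  (the sigma algebra generated by the cone sets, which form a countable basis of the
  profinite topology on G) that is invariant under left translation.\<close>
definition haar_prob :: "('x list \<Rightarrow> 'x list) set \<Rightarrow> ('x list \<Rightarrow> 'x list) measure \<Rightarrow> bool" where
  "haar_prob G \<mu> \<longleftrightarrow> prob_space \<mu> \<and> space \<mu> = G \<and>
     sets \<mu> = sigma_sets G {cone G n a | n a. a \<in> trunc n ` G} \<and>
     (\<forall>g\<in>G. \<forall>A\<in>sets \<mu>. (\<lambda>h. g \<circ> h) ` A \<in> sets \<mu> \<and>
        emeasure \<mu> ((\<lambda>h. g \<circ> h) ` A) = emeasure \<mu> A)"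

end

theory Submission
  imports Defs
begin

text \<open>
  Left translation by g \<in> G maps the level stabiliser St(k) onto the cone of g, and it maps
  D(id) = {h \<in> St(n). h|_v \<in> St(m)} onto D(g) = C_{\<pi>_n g} \<inter> T_v^{-1}(C_{\<pi>_m (g|_v)}), because
  h \<in> St(n) fixes v and hence (g h)|_v = g|_v h|_v. By invariance of \<mu>, all cones of level k have
  measure \<mu>(St(k)) and every nonempty set C_a \<inter> T_v^{-1}(C_b) has measure K = \<mu>(D(id)).
  Sorting the elements of St(n) by the level-m truncation of their section at v covers St(n)
  by at most N = |\<pi>_m(G)| translates of D(id), so \<mu>(St(n)) \<le> N K, while the N cones of
  level m give N \<mu>(St(m)) \<le> 1. Hence \<mu>(C_a) \<mu>(C_b) = \<mu>(St(n)) \<mu>(St(m)) \<le> K.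
\<close>

lemma tree_aut_Nil: "tree_aut g \<Longrightarrow> g [] = []"
  unfolding tree_aut_def by blast

lemma tree_aut_snoc: "tree_aut g \<Longrightarrow> \<exists>y. g (v @ [x]) = g v @ [y]"
  unfolding tree_aut_def by blast

lemma length_tree_aut: "tree_aut g \<Longrightarrow> length (g w) = length w"
proof (induction w rule: rev_induct)
  case Nil
  then show ?case by (simp add: tree_aut_Nil)
next
  case (snoc x w)
  then obtain y where "g (w @ [x]) = g w @ [y]" using tree_aut_snoc by metis
  then show ?case using snoc by simp
qed

lemma tree_aut_append_prefix: "tree_aut g \<Longrightarrow> \<exists>u. g (v @ w) = g v @ u"
proof (induction w rule: rev_induct)
  case Nil
  then show ?case by simp
next
  case (snoc x w)
  then obtain u where "g (v @ w) = g v @ u" by blast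
  moreover obtain y where "g ((v @ w) @ [x]) = g (v @ w) @ [y]"
    using tree_aut_snoc[OF snoc(2)] by metis
  ultimately show ?case by simp
qed

lemma tree_aut_append_sect: "tree_aut g \<Longrightarrow> g (v @ w) = g v @ sect g v w"
  using tree_aut_append_prefix[of g v w] by (auto simp: sect_def)

lemma sect_id [simp]: "sect id v = id"
  by (auto simp: sect_def)

lemma sect_comp:
  assumes g: "tree_aut g" and h: "tree_aut h"
  shows "sect (g \<circ> h) v = sect g (h v) \<circ> sect h v"
proof
  fix w
  have "sect (g \<circ> h) v w = drop (length (g (h v))) (g (h (v @ w)))"
    unfolding sect_def comp_def ..
  also have "\<dots> = sect g (h v) (sect h v w)"
    unfolding tree_aut_append_sect[OF h] tree_aut_append_sect[OF g] by simp
  finally show "sect (g \<circ> h) v w = (sect g (h v) \<circ> sect h v) w"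
    by simp
qed

lemma trunc_eq_iff: "trunc k f = trunc k g \<longleftrightarrow> (\<forall>w. length w \<le> k \<longrightarrow> f w = g w)"
  unfolding trunc_def restrict_def fun_eq_iff by auto

lemma trunc_comp_eq_iff: "inj g \<Longrightarrow> trunc k (g \<circ> h) = trunc k g \<longleftrightarrow> trunc k h = trunc k id"
  by (simp add: trunc_eq_iff inj_eq)

lemma finite_trunc_image:
  fixes G :: "('x::finite list \<Rightarrow> 'x list) set"
  assumes "\<forall>g\<in>G. tree_aut g"
  shows "finite (trunc k ` G)"
proof -
  let ?W = "{w :: 'x list. length w \<le> k}"
  have "finite ?W"
    using finite_lists_length_le[of "UNIV :: 'x set" k] by simp
  then have "finite (PiE ?W (\<lambda>_. ?W))"
    by (intro finite_PiE) auto
  moreover have "trunc k ` G \<subseteq> PiE ?W (\<lambda>_. ?W)"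
    using assms by (auto simp: trunc_def length_tree_aut split: if_splits)
  ultimately show ?thesis
    by (rule finite_subset[rotated])
qed

locale haar_self_similar =
  fixes G :: "('x::finite list \<Rightarrow> 'x list) set" and \<mu> :: "('x list \<Rightarrow> 'x list) measure"
  assumes aut_subgroup: "aut_subgroup G"
    and self_similar: "self_similar G"
    and haar_prob: "haar_prob G \<mu>"
begin

sublocale prob_space \<mu>
  using haar_prob by (simp add: haar_prob_def)

lemma tree_aut_G: "g \<in> G \<Longrightarrow> tree_aut g"
  using aut_subgroup by (auto simp: aut_subgroup_def)

lemma inj_G: "g \<in> G \<Longrightarrow> inj g"
  using tree_aut_G by (auto simp: tree_aut_def bij_is_inj)

lemma id_G: "id \<in> G"
  using aut_subgroup by (simp add: aut_subgroup_def)

lemma comp_G: "g \<in> G \<Longrightarrow> h \<in> G \<Longrightarrow> g \<circ> h \<in> G"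
  using aut_subgroup by (simp add: aut_subgroup_def)

lemma inv_G: "g \<in> G \<Longrightarrow> inv g \<in> G"
  using aut_subgroup by (simp add: aut_subgroup_def)

lemma sect_G: "g \<in> G \<Longrightarrow> sect g v \<in> G"
  using self_similar by (simp add: self_similar_def)

lemma comp_inv_cancel: "g \<in> G \<Longrightarrow> g \<circ> (inv g \<circ> f) = f"
  using tree_aut_G unfolding tree_aut_def by (metis bij_is_surj surj_iff comp_assoc id_comp)

lemma finite_trunc_G: "finite (trunc k ` G)"
  using finite_trunc_image tree_aut_G by blast

lemma cone_in_sets: "c \<in> trunc k ` G \<Longrightarrow> cone G k c \<in> sets \<mu>"
  using haar_prob unfolding haar_prob_def by (auto intro!: sigma_sets.Basic)

lemma measure_left_translate:
  assumes g: "g \<in> G" and A: "A \<in> sets \<mu>" and B: "B \<subseteq> G"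
    and translate: "\<And>h. h \<in> G \<Longrightarrow> g \<circ> h \<in> B \<longleftrightarrow> h \<in> A"
  shows "measure \<mu> B = measure \<mu> A"
proof -
  have "A \<subseteq> G"
    using sets.sets_into_space[OF A] haar_prob by (simp add: haar_prob_def)
  have "B = (\<lambda>h. g \<circ> h) ` A"
  proof (intro equalityI subsetI)
    fix f assume "f \<in> B"
    have "inv g \<circ> f \<in> G"
      using \<open>f \<in> B\<close> B g by (blast intro: comp_G inv_G)
    moreover have "g \<circ> (inv g \<circ> f) = f"
      using g by (rule comp_inv_cancel)
    ultimately have "inv g \<circ> f \<in> A"
      using translate \<open>f \<in> B\<close> by metis
    then show "f \<in> (\<lambda>h. g \<circ> h) ` A"
      using \<open>g \<circ> (inv g \<circ> f) = f\<close> by (metis image_eqI)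
  next
    fix f assume "f \<in> (\<lambda>h. g \<circ> h) ` A"
    then show "f \<in> B"
      using \<open>A \<subseteq> G\<close> translate by blast
  qed
  then show ?thesis
    using haar_prob g A by (simp add: haar_prob_def measure_def)
qed

lemma trunc_determined_in_sets:
  assumes "A \<subseteq> G" and "\<And>f g. f \<in> A \<Longrightarrow> g \<in> G \<Longrightarrow> trunc k f = trunc k g \<Longrightarrow> g \<in> A"
  shows "A \<in> sets \<mu>"
proof -
  have "finite (trunc k ` A)"
    using finite_trunc_G \<open>A \<subseteq> G\<close> by (meson finite_subset image_mono)
  moreover have "cone G k c \<in> sets \<mu>" if "c \<in> trunc k ` A" for c
    using that \<open>A \<subseteq> G\<close> by (blast intro: cone_in_sets)
  ultimately have "(\<Union>c\<in>trunc k ` A. cone G k c) \<in> sets \<mu>"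
    by (rule sets.finite_UN)
  moreover have "A = (\<Union>c\<in>trunc k ` A. cone G k c)"
    using assms by (auto simp: cone_def)
  ultimately show ?thesis
    by simp
qed

definition level_stab :: "nat \<Rightarrow> ('x list \<Rightarrow> 'x list) set" where
  "level_stab k = cone G k (trunc k id)"

lemma level_stab_in_sets: "level_stab k \<in> sets \<mu>"
  unfolding level_stab_def using id_G by (intro cone_in_sets) blast

lemma measure_cone:
  assumes "c \<in> trunc k ` G"
  shows "measure \<mu> (cone G k c) = measure \<mu> (level_stab k)"
proof -
  obtain g where g: "g \<in> G" and c: "c = trunc k g"
    using assms by blast
  show ?thesis
    using g level_stab_in_sets
    by (intro measure_left_translate)
      (auto simp: c cone_def level_stab_def comp_G trunc_comp_eq_iff inj_G)
qed

lemma card_trunc_mult_measure_level_stab_le_1: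
  "real (card (trunc k ` G)) * measure \<mu> (level_stab k) \<le> 1"
proof -
  have "real (card (trunc k ` G)) * measure \<mu> (level_stab k)
      = (\<Sum>c\<in>trunc k ` G. measure \<mu> (cone G k c))"
    by (simp add: measure_cone)
  also have "\<dots> = measure \<mu> (\<Union>c\<in>trunc k ` G. cone G k c)"
    using cone_in_sets
    by (intro finite_measure_finite_Union[symmetric] finite_trunc_G)
      (auto simp: disjoint_family_on_def cone_def)
  also have "\<dots> \<le> 1"
    by (rule prob_le_1)
  finally show ?thesis .
qed

definition double_cone ::
    "nat \<Rightarrow> nat \<Rightarrow> 'x list \<Rightarrow> ('x list \<Rightarrow> 'x list) \<Rightarrow> ('x list \<Rightarrow> 'x list) set"
  where "double_cone n m v g =
    cone G n (trunc n g) \<inter> {f \<in> G. sect f v \<in> cone G m (trunc m (sect g v))}"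

lemma double_cone_in_sets:
  assumes "length v = n"
  shows "double_cone n m v g \<in> sets \<mu>"
proof (rule trunc_determined_in_sets[where k = "n + m"])
  fix f f' assume "f \<in> double_cone n m v g" "f' \<in> G" "trunc (n + m) f = trunc (n + m) f'"
  moreover have "trunc n f = trunc n f'" "trunc m (sect f v) = trunc m (sect f' v)"
    using \<open>trunc (n + m) f = trunc (n + m) f'\<close> assms by (auto simp: trunc_eq_iff sect_def)
  ultimately show "f' \<in> double_cone n m v g"
    by (auto simp: double_cone_def cone_def sect_G)
qed (auto simp: double_cone_def cone_def)

lemma comp_in_double_cone_iff:
  assumes g: "g \<in> G" and h: "h \<in> G" and v: "length v = n"
  shows "g \<circ> h \<in> double_cone n m v g \<longleftrightarrow> h \<in> double_cone n m v id"
proof -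
  have "trunc m (sect (g \<circ> h) v) = trunc m (sect g v) \<longleftrightarrow> trunc m (sect h v) = trunc m id"
    if "trunc n h = trunc n id"
  proof -
    have "h v = v"
      using that v by (simp add: trunc_eq_iff)
    then have "sect (g \<circ> h) v = sect g v \<circ> sect h v"
      using sect_comp tree_aut_G g h by metis
    then show ?thesis
      using trunc_comp_eq_iff inj_G sect_G g by metis
  qed
  then show ?thesis
    using g h comp_G sect_G inj_G
    by (auto simp: double_cone_def cone_def trunc_comp_eq_iff)
qed

lemma measure_double_cone:
  assumes "g \<in> G" and "length v = n"
  shows "measure \<mu> (double_cone n m v g) = measure \<mu> (double_cone n m v id)"
proof (rule measure_left_translate[OF assms(1) double_cone_in_sets[OF assms(2)]])
  show "double_cone n m v g \<subseteq> G"
    by (auto simp: double_cone_def cone_def)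
  show "g \<circ> h \<in> double_cone n m v g \<longleftrightarrow> h \<in> double_cone n m v id" if "h \<in> G" for h
    using comp_in_double_cone_iff assms that by blast
qed

lemma measure_level_stab_le:
  assumes v: "length v = n"
  shows "measure \<mu> (level_stab n) \<le> real (card (trunc m ` G)) * measure \<mu> (double_cone n m v id)"
proof -
  define I where "I = (\<lambda>h. trunc m (sect h v)) ` level_stab n"
  define E where "E c = {f \<in> level_stab n. trunc m (sect f v) = c}" for c
  have "I \<subseteq> trunc m ` G"
    unfolding I_def level_stab_def cone_def using sect_G by blast
  then have "finite I"
    using finite_trunc_G finite_subset by blast
  have E_double_cone: "\<exists>h\<in>G. E c = double_cone n m v h" if "c \<in> I" for c
  proof -
    obtain h where "h \<in> level_stab n" "c = trunc m (sect h v)"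
      using \<open>c \<in> I\<close> unfolding I_def by blast
    then have "E c = double_cone n m v h"
      unfolding E_def double_cone_def level_stab_def cone_def using sect_G by auto
    with \<open>h \<in> level_stab n\<close> show ?thesis
      by (auto simp: level_stab_def cone_def)
  qed
  have E_sets: "E ` I \<subseteq> sets \<mu>"
    using E_double_cone double_cone_in_sets[OF v] by fastforce
  have "level_stab n = (\<Union>c\<in>I. E c)"
    by (auto simp: I_def E_def)
  then have "measure \<mu> (level_stab n) = measure \<mu> (\<Union>c\<in>I. E c)"
    by simp
  also have "\<dots> \<le> (\<Sum>c\<in>I. measure \<mu> (E c))"
    by (rule finite_measure_subadditive_finite[OF \<open>finite I\<close> E_sets])
  also have "\<dots> = (\<Sum>c\<in>I. measure \<mu> (double_cone n m v id))"
    using E_double_cone measure_double_cone[OF _ v] by (intro sum.cong refl) metis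
  also have "\<dots> = real (card I) * measure \<mu> (double_cone n m v id)"
    by simp
  also have "\<dots> \<le> real (card (trunc m ` G)) * measure \<mu> (double_cone n m v id)"
    using card_mono[OF finite_trunc_G \<open>I \<subseteq> trunc m ` G\<close>] by (intro mult_right_mono) auto
  finally show ?thesis .
qed

lemma measure_cone_inter_sect_preimage_ge:
  assumes v: "length v = n" and a: "a \<in> trunc n ` G" and b: "b \<in> trunc m ` G"
    and nonempty: "cone G n a \<inter> {g \<in> G. sect g v \<in> cone G m b} \<noteq> {}"
  shows "measure \<mu> (cone G n a) * measure \<mu> (cone G m b)
    \<le> measure \<mu> (cone G n a \<inter> {g \<in> G. sect g v \<in> cone G m b})"
proof -
  define N where "N = real (card (trunc m ` G))"
  define K where "K = measure \<mu> (double_cone n m v id)"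
  obtain g where "g \<in> cone G n a \<inter> {g \<in> G. sect g v \<in> cone G m b}"
    using nonempty by blast
  then have "g \<in> G" and "cone G n a \<inter> {g \<in> G. sect g v \<in> cone G m b} = double_cone n m v g"
    by (auto simp: cone_def double_cone_def)
  have "measure \<mu> (cone G n a) * measure \<mu> (cone G m b)
      = measure \<mu> (level_stab n) * measure \<mu> (level_stab m)"
    using a b by (simp add: measure_cone)
  also have "\<dots> \<le> N * K * measure \<mu> (level_stab m)"
    unfolding N_def K_def using measure_level_stab_le[OF v] by (rule mult_right_mono) simp
  also have "\<dots> = K * (N * measure \<mu> (level_stab m))"
    by simp
  also have "\<dots> \<le> K"
    unfolding N_def K_def using card_trunc_mult_measure_level_stab_le_1
    by (intro mult_left_le) simp_all
  also have "\<dots> = measure \<mu> (cone G n a \<inter> {g \<in> G. sect g v \<in> cone G m b})"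
    unfolding K_def \<open>_ = double_cone n m v g\<close> using measure_double_cone[OF \<open>g \<in> G\<close> v] by simp
  finally show ?thesis .
qed

end

theorem lemma1:
  fixes G :: "('x::finite list \<Rightarrow> 'x list) set"
    and \<mu> :: "('x list \<Rightarrow> 'x list) measure"
  assumes "aut_subgroup G" and "profinite_closed G" and "self_similar G"
    and "haar_prob G \<mu>"
  shows "\<forall>n m a b v. n \<ge> 1 \<and> m \<ge> 1 \<and> a \<in> trunc n ` G \<and> b \<in> trunc m ` G \<and>
           length v = n \<and>
           cone G n a \<inter> {g \<in> G. sect g v \<in> cone G m b} \<noteq> {} \<longrightarrow>
           measure \<mu> (cone G n a \<inter> {g \<in> G. sect g v \<in> cone G m b})
             \<ge> measure \<mu> (cone G n a) * measure \<mu> (cone G m b)"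
proof -
  \<comment> \<open>Closedness only matters for the existence of the Haar measure, which is assumed here.\<close>
  interpret haar_self_similar G \<mu>
    using assms(1,3,4) by unfold_locales
  show ?thesis
    using measure_cone_inter_sect_preimage_ge by blast
qed

end
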